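(* On each of the two charts of $\mathbb OP^{(1,1)}$, with coordinates $(u,v)\in\mathbb O^2$ satisfying $1+|u|^2-|v|^2>0$, the symmetric bilinear form whose quadratic form on tangent vectors $(du,dv)=(\xi,\eta)$ is $$ds^2=\frac{|\xi|^2(1-|v|^2)-|\eta|^2(1+|u|^2)+2\mathrm{Re}\big[(u\bar v)(\eta\bar\xi)\big]}{(1+|u|^2-|v|^2)^2}$$ defines a non-degenerate metric on $\mathbb OP^{(1,1)}$ of signature $(8,8)$.
   Context: Octonions $\mathbb O=\mathbb H\oplus\mathbb H$ with product $(q_1,q_2)(p_1,p_2)=(q_1p_1-\bar p_2q_2,\ p_2q_1+q_2\bar p_1)$, conjugation $\overline{(q_1,q_2)}=(\bar q_1,-q_2)$, $\langle a,b\rangle=\mathrm{Re}(a\bar b)$, $|a|^2=\langle a,a\rangle$ (positive definite). Let $U_1=\{(1,u,v)\in\mathbb O^3:1+|u|^2-|v|^2>0\}$, $U_2=\{(u,1,v)\in\mathbb O^3:|u|^2+1-|v|^2>0\}$, and on $U_1\cup U_2$ let $[a,b,c]\sim[d,e,f]$ iff $(a,b,c)=(d\lambda,e\lambda,f\lambda)$ for some $\lambda\in\mathbb O\setminus\{0\}$. The indefinite octonionic projective plane is $\mathbb OP^{(1,1)}=(U_1\cup U_2)/_\sim$, with charts $[1,u,v]\mapsto(u,v)$ and $[u,1,v]\mapsto(u,v)$. *)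

theory Defs
  imports "HOL-Analysis.Analysis"
begin

text \<open>Quaternions modelled as R^4 = real x real x real x real (coordinates 1,i,j,k),
  with the Hamilton product; octonions as pairs of quaternions (Cayley-Dickson) with the
  product from the paper.\<close>

type_synonym quat = "real \<times> real \<times> real \<times> real"
type_synonym oct = "quat \<times> quat"

definition qmult :: "quat \<Rightarrow> quat \<Rightarrow> quat" where
  "qmult a b = (case a of (a0,a1,a2,a3) \<Rightarrow> case b of (b0,b1,b2,b3) \<Rightarrow>
     (a0*b0 - a1*b1 - a2*b2 - a3*b3,
      a0*b1 + a1*b0 + a2*b3 - a3*b2,
      a0*b2 - a1*b3 + a2*b0 + a3*b1,
      a0*b3 + a1*b2 - a2*b1 + a3*b0))"

definition qconj :: "quat \<Rightarrow> quat" where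
  "qconj a = (case a of (a0,a1,a2,a3) \<Rightarrow> (a0, -a1, -a2, -a3))"

definition omult :: "oct \<Rightarrow> oct \<Rightarrow> oct" where
  "omult x y = (case x of (q1,q2) \<Rightarrow> case y of (p1,p2) \<Rightarrow>
     (qmult q1 p1 - qmult (qconj p2) q2, qmult p2 q1 + qmult q2 (qconj p1)))"

definition oconj :: "oct \<Rightarrow> oct" where
  "oconj x = (case x of (q1,q2) \<Rightarrow> (qconj q1, - q2))"

definition oRe :: "oct \<Rightarrow> real" where
  "oRe x = fst (fst x)"

definition oinner :: "oct \<Rightarrow> oct \<Rightarrow> real" where
  "oinner a b = oRe (omult a (oconj b))"

definition onorm2 :: "oct \<Rightarrow> real" where
  "onorm2 a = oinner a a"

definition oinv :: "oct \<Rightarrow> oct" where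
  "oinv a = scaleR (1 / onorm2 a) (oconj a)"

definition chart_dom :: "(oct \<times> oct) set" where
  "chart_dom = {(u,v). 1 + onorm2 u - onorm2 v > 0}"

definition ds2 :: "oct \<times> oct \<Rightarrow> oct \<times> oct \<Rightarrow> real" where
  "ds2 p w = (case p of (u,v) \<Rightarrow> case w of (\<xi>,\<eta>) \<Rightarrow>
     (onorm2 \<xi> * (1 - onorm2 v) - onorm2 \<eta> * (1 + onorm2 u)
      + 2 * oRe (omult (omult u (oconj v)) (omult \<eta> (oconj \<xi>))))
     / (1 + onorm2 u - onorm2 v)^2)"

definition metric_form :: "oct \<times> oct \<Rightarrow> oct \<times> oct \<Rightarrow> oct \<times> oct \<Rightarrow> real" where
  "metric_form p x y = (ds2 p (x + y) - ds2 p (x - y)) / 4"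

text \<open>Transition map between the two charts: [1,u,v] = [u^{-1},1,v u^{-1}] (scaling by
  lambda = u), and symmetrically [u,1,v] = [1,u^{-1},v u^{-1}]; defined where u is nonzero.\<close>
definition transition :: "oct \<times> oct \<Rightarrow> oct \<times> oct" where
  "transition p = (case p of (u,v) \<Rightarrow> (oinv u, omult v (oinv u)))"

definition nondegenerate :: "('a::real_vector \<Rightarrow> 'a \<Rightarrow> real) \<Rightarrow> bool" where
  "nondegenerate B \<longleftrightarrow> (\<forall>x. (\<forall>y. B x y = 0) \<longrightarrow> x = 0)"

definition pos_index :: "('a::euclidean_space \<Rightarrow> 'a \<Rightarrow> real) \<Rightarrow> nat" where
  "pos_index B = Max {d. \<exists>S. subspace S \<and> dim S = d \<and> (\<forall>x\<in>S. x \<noteq> 0 \<longrightarrow> B x x > 0)}"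

definition neg_index :: "('a::euclidean_space \<Rightarrow> 'a \<Rightarrow> real) \<Rightarrow> nat" where
  "neg_index B = Max {d. \<exists>S. subspace S \<and> dim S = d \<and> (\<forall>x\<in>S. x \<noteq> 0 \<longrightarrow> B x x < 0)}"

definition has_signature :: "('a::euclidean_space \<Rightarrow> 'a \<Rightarrow> real) \<Rightarrow> nat \<Rightarrow> nat \<Rightarrow> bool" where
  "has_signature B p q \<longleftrightarrow> pos_index B = p \<and> neg_index B = q"

end

theory Submission
  imports Defs
begin

(* Write a = u conj(v) and D = 1 + |u|^2 - |v|^2 at a chart point (u,v).  Then
     ds^2 = ((1 - |v|^2) |xi|^2 - (1 + |u|^2) |eta|^2 + 2 <a eta, xi>) / D^2,
   and completing the square in eta, with eta' = eta - conj(a) xi / (1 + |u|^2), turns it into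
     |xi|^2 / ((1 + |u|^2) D) - (1 + |u|^2) |eta'|^2 / D^2,
   using |a|^2 = |u|^2 |v|^2: a diagonal form with eight positive and eight negative directions.
   The chart change (u,v) -> (u^-1, v u^-1) pulls ds^2 back to itself: the norms rescale by the
   multiplicativity of the octonion norm, and the cross term by the Moufang identity. *)

section \<open>Octonion identities\<close>

lemma oct_induct:
  "(\<And>a0 a1 a2 a3 a4 a5 a6 a7. P ((a0,a1,a2,a3),(a4,a5,a6,a7))) \<Longrightarrow> P (x :: oct)"
  by (metis prod.collapse)

lemmas oct_defs = omult_def qmult_def qconj_def oRe_def onorm2_def oinner_def oconj_def

lemma oinner_eq_inner: "oinner x y = x \<bullet> y"
  by (induct x rule: oct_induct; induct y rule: oct_induct) (simp add: oct_defs inner_prod_def algebra_simps)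

lemma onorm2_eq_inner: "onorm2 x = x \<bullet> x"
  by (simp add: onorm2_def oinner_eq_inner)

lemma bilinear_omult: "bilinear omult"
  unfolding bilinear_def
proof (intro allI conjI linearI)
  fix x y z :: oct and c :: real
  show "omult (x + y) z = omult x z + omult y z" "omult z (x + y) = omult z x + omult z y"
    "omult (c *\<^sub>R x) z = c *\<^sub>R omult x z" "omult z (c *\<^sub>R x) = c *\<^sub>R omult z x"
    by (induct x rule: oct_induct; induct y rule: oct_induct; induct z rule: oct_induct;
        simp add: oct_defs algebra_simps)+
qed

interpretation omult: bounded_bilinear omult
  using bilinear_omult bilinear_conv_bounded_bilinear by blast

lemma bounded_linear_oconj: "bounded_linear oconj"
  unfolding linear_conv_bounded_linear[symmetric]
proof (rule linearI)
  fix x y :: oct and c :: real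
  show "oconj (x + y) = oconj x + oconj y" "oconj (c *\<^sub>R x) = c *\<^sub>R oconj x"
    by (induct x rule: oct_induct; induct y rule: oct_induct; simp add: oct_defs)+
qed

lemma oconj_oconj [simp]: "oconj (oconj x) = x"
  by (induct x rule: oct_induct) (simp add: oct_defs)

lemma oconj_omult: "oconj (omult x y) = omult (oconj y) (oconj x)"
  by (induct x rule: oct_induct; induct y rule: oct_induct) (simp add: oct_defs algebra_simps)

lemma oRe_omult_oconj: "oRe (omult x (oconj y)) = x \<bullet> y"
  using oinner_eq_inner oinner_def by metis

lemma oRe_omult_assoc: "oRe (omult (omult x y) z) = oRe (omult x (omult y z))"
  by (induct x rule: oct_induct; induct y rule: oct_induct; induct z rule: oct_induct)
     (simp add: oct_defs, algebra)

lemma inner_omult_left: "omult x y \<bullet> z = y \<bullet> omult (oconj x) z"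
  by (induct x rule: oct_induct; induct y rule: oct_induct; induct z rule: oct_induct)
     (simp add: oct_defs inner_prod_def, algebra)

lemma inner_omult_right: "omult x y \<bullet> z = x \<bullet> omult z (oconj y)"
  by (induct x rule: oct_induct; induct y rule: oct_induct; induct z rule: oct_induct)
     (simp add: oct_defs inner_prod_def, algebra)

lemma omult_oconj_left_cancel: "omult x (omult (oconj x) y) = (x \<bullet> x) *\<^sub>R y"
  by (induct x rule: oct_induct; induct y rule: oct_induct)
     (simp add: oct_defs inner_prod_def, safe; algebra)

lemma omult_oconj_right_cancel: "omult (omult y (oconj x)) x = (x \<bullet> x) *\<^sub>R y"
  by (induct x rule: oct_induct; induct y rule: oct_induct)
     (simp add: oct_defs inner_prod_def, safe; algebra)

lemma omult_flexible: "omult x (omult y x) = omult (omult x y) x"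
  by (induct x rule: oct_induct; induct y rule: oct_induct) (simp add: oct_defs, safe; algebra)

lemma omult_moufang: "omult (omult x y) (omult z x) = omult (omult x (omult y z)) x"
  by (induct x rule: oct_induct; induct y rule: oct_induct; induct z rule: oct_induct)
     (simp add: oct_defs, safe; algebra)

lemma inner_omult_omult: "omult x y \<bullet> omult x y = (x \<bullet> x) * (y \<bullet> y)"
  by (induct x rule: oct_induct; induct y rule: oct_induct) (simp add: oct_defs inner_prod_def, algebra)

lemma omult_oconj_sandwich:
  "omult (omult (oconj u) h) (oconj u) = (2 * (u \<bullet> h)) *\<^sub>R oconj u - (u \<bullet> u) *\<^sub>R oconj h"
  by (induct u rule: oct_induct; induct h rule: oct_induct)
     (simp add: oct_defs inner_prod_def, safe; algebra)

lemma inner_oconj_oconj [simp]: "oconj x \<bullet> oconj y = x \<bullet> y"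
  by (induct x rule: oct_induct; induct y rule: oct_induct) (simp add: oct_defs inner_prod_def)

lemma inner_omult_cancel: "omult a x \<bullet> omult a y = (a \<bullet> a) * (x \<bullet> y)"
  using omult_oconj_left_cancel[of "oconj a" y] by (simp add: inner_omult_left)

section \<open>Signature of a diagonal form\<close>

lemma Max_dim_definite_subspace_eq:
  fixes R :: "'a::euclidean_space \<Rightarrow> bool"
  assumes P: "subspace P" "\<forall>x\<in>P. x \<noteq> 0 \<longrightarrow> R x"
    and T: "subspace T" "\<forall>x\<in>T. x \<noteq> 0 \<longrightarrow> \<not> R x"
    and dims: "dim P + dim T = DIM('a)"
  shows "Max {d. \<exists>S. subspace S \<and> dim S = d \<and> (\<forall>x\<in>S. x \<noteq> 0 \<longrightarrow> R x)} = dim P"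
    (is "Max ?D = _")
proof (rule Max_eqI)
  show "d \<le> dim P" if "d \<in> ?D" for d
  proof -
    from that obtain S where S: "subspace S" "dim S = d" "\<forall>x\<in>S. x \<noteq> 0 \<longrightarrow> R x" by auto
    have "S \<inter> T = {0}" using S T subspace_0 by fastforce
    then have "dim {x + y |x y. x \<in> S \<and> y \<in> T} = dim S + dim T"
      using dim_sums_Int[OF S(1) T(1)] by simp
    moreover have "dim {x + y |x y. x \<in> S \<and> y \<in> T} \<le> DIM('a)" by (rule dim_subset_UNIV)
    ultimately show ?thesis using S(2) dims by linarith
  qed
  then show "finite ?D"
    by (meson finite_atMost finite_subset atMost_iff subsetI)
  show "dim P \<in> ?D" using P by auto
qed

lemma has_signature_if_definite_subspaces:
  fixes B :: "'a::euclidean_space \<Rightarrow> 'a \<Rightarrow> real"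
  assumes "subspace P" "\<forall>x\<in>P. x \<noteq> 0 \<longrightarrow> B x x > 0"
    and "subspace N" "\<forall>x\<in>N. x \<noteq> 0 \<longrightarrow> B x x < 0"
    and "dim P + dim N = DIM('a)"
  shows "has_signature B (dim P) (dim N)"
proof -
  have "pos_index B = dim P"
    unfolding pos_index_def using assms by (intro Max_dim_definite_subspace_eq) auto
  moreover have "neg_index B = dim N"
    unfolding neg_index_def using assms by (intro Max_dim_definite_subspace_eq) auto
  ultimately show ?thesis by (simp add: has_signature_def)
qed

lemma dim_range_linear_inj:
  fixes f :: "'a::euclidean_space \<Rightarrow> 'b::euclidean_space"
  assumes "linear f" "inj f"
  shows "dim (range f) = DIM('a)"
  using dim_image_eq[OF assms(1), of UNIV] assms(2) by (simp add: inj_on_def)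

context
  fixes B :: "'a::euclidean_space \<times> 'b::euclidean_space \<Rightarrow> 'a \<times> 'b \<Rightarrow> real"
    and \<Psi> :: "'a \<times> 'b \<Rightarrow> 'a \<times> 'b" and \<alpha> \<beta> :: real
  assumes \<Psi>: "linear \<Psi>" "bij \<Psi>" and pos: "\<alpha> > 0" "\<beta> > 0"
    and diagonal: "\<And>z z'. B (\<Psi> z) (\<Psi> z') = \<alpha> * (fst z \<bullet> fst z') - \<beta> * (snd z \<bullet> snd z')"
begin

lemma nondegenerate_if_diagonal: "nondegenerate B"
  unfolding nondegenerate_def
proof (intro allI impI)
  fix x assume "\<forall>y. B x y = 0"
  obtain z where x: "x = \<Psi> z" using bij_is_surj[OF \<Psi>(2)] by (metis surjD)
  have "B (\<Psi> z) (\<Psi> (fst z, - snd z)) = 0" using \<open>\<forall>y. B x y = 0\<close> x by blast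
  then have "\<alpha> * (fst z \<bullet> fst z) + \<beta> * (snd z \<bullet> snd z) = 0" by (simp add: diagonal)
  then have "\<alpha> * (fst z \<bullet> fst z) = 0" "\<beta> * (snd z \<bullet> snd z) = 0"
    using pos by (simp_all add: add_nonneg_eq_0_iff)
  then have "z = 0" using pos by (simp add: prod_eq_iff)
  then show "x = 0" using x linear_0[OF \<Psi>(1)] by simp
qed

lemma has_signature_if_diagonal: "has_signature B DIM('a) DIM('b)"
proof -
  let ?P = "range (\<lambda>p. \<Psi> (p, 0))" and ?N = "range (\<lambda>q. \<Psi> (0, q))"
  have lin: "linear (\<lambda>p. \<Psi> (p, 0))" "linear (\<lambda>q. \<Psi> (0, q))"
    using \<Psi>(1) by (auto intro!: linear_compose[unfolded o_def, OF _ \<Psi>(1)] linearI)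
  have inj: "inj (\<lambda>p. \<Psi> (p, 0))" "inj (\<lambda>q. \<Psi> (0, q))"
    using bij_is_inj[OF \<Psi>(2)] by (auto simp: inj_def)
  have "\<forall>x\<in>?P. x \<noteq> 0 \<longrightarrow> B x x > 0" "\<forall>x\<in>?N. x \<noteq> 0 \<longrightarrow> B x x < 0"
    using pos linear_0[OF \<Psi>(1)] by (auto simp: diagonal zero_prod_def zero_less_mult_iff)
  moreover have "subspace ?P" "subspace ?N"
    using lin by (auto intro: linear_subspace_image)
  ultimately show ?thesis
    using has_signature_if_definite_subspaces[of ?P B ?N] dim_range_linear_inj[OF lin(1) inj(1)]
      dim_range_linear_inj[OF lin(2) inj(2)] by simp
qed

end

section \<open>The metric in a chart\<close>

definition ds2_polar :: "oct \<Rightarrow> oct \<Rightarrow> oct \<times> oct \<Rightarrow> oct \<times> oct \<Rightarrow> real" where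
  "ds2_polar u v x y =
     ((1 - v \<bullet> v) * (fst x \<bullet> fst y) - (1 + u \<bullet> u) * (snd x \<bullet> snd y)
      + omult (omult u (oconj v)) (snd x) \<bullet> fst y + omult (omult u (oconj v)) (snd y) \<bullet> fst x)
     / (1 + u \<bullet> u - v \<bullet> v)^2"

lemma ds2_eq_inner:
  "ds2 (u, v) w =
     ((1 - v \<bullet> v) * (fst w \<bullet> fst w) - (1 + u \<bullet> u) * (snd w \<bullet> snd w)
      + 2 * (omult (omult u (oconj v)) (snd w) \<bullet> fst w)) / (1 + u \<bullet> u - v \<bullet> v)^2"
proof -
  have "oRe (omult (omult u (oconj v)) (omult (snd w) (oconj (fst w))))
      = omult (omult u (oconj v)) (snd w) \<bullet> fst w"
    by (metis oRe_omult_assoc oRe_omult_oconj)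
  then show ?thesis by (simp add: ds2_def onorm2_eq_inner split_beta algebra_simps)
qed

lemma ds2_eq_ds2_polar: "ds2 (u, v) w = ds2_polar u v w w"
  by (simp add: ds2_eq_inner ds2_polar_def inner_commute)

lemma metric_form_eq_ds2_polar: "metric_form (u, v) = ds2_polar u v"
proof (intro ext)
  fix x y
  show "metric_form (u, v) x y = ds2_polar u v x y"
    by (simp add: metric_form_def ds2_eq_inner ds2_polar_def inner_add_left inner_add_right
        inner_diff_left inner_diff_right omult.add_right omult.diff_right divide_simps inner_commute,
        simp add: algebra_simps)
qed

lemma ds2_polar_commute: "ds2_polar u v x y = ds2_polar u v y x"
  by (simp add: ds2_polar_def inner_commute algebra_simps)

lemma bilinear_ds2_polar: "bilinear (ds2_polar u v)"
  unfolding bilinear_def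
  by (intro allI conjI linearI)
     (simp_all add: ds2_polar_def inner_add_left inner_add_right omult.add_right omult.scaleR_right
        divide_simps algebra_simps)

definition ds2_shear :: "oct \<Rightarrow> oct \<Rightarrow> oct \<times> oct \<Rightarrow> oct \<times> oct" where
  "ds2_shear u v z = (fst z, snd z + (1 / (1 + u \<bullet> u)) *\<^sub>R omult (oconj (omult u (oconj v))) (fst z))"

lemma linear_ds2_shear: "linear (ds2_shear u v)"
  by (rule linearI) (simp_all add: ds2_shear_def omult.add_right omult.scaleR_right algebra_simps)

lemma bij_ds2_shear: "bij (ds2_shear u v)"
proof (rule o_bij)
  let ?unshear = "\<lambda>z. (fst z, snd z - (1 / (1 + u \<bullet> u)) *\<^sub>R omult (oconj (omult u (oconj v))) (fst z))"
  show "?unshear \<circ> ds2_shear u v = id" "ds2_shear u v \<circ> ?unshear = id"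
    by (simp_all add: ds2_shear_def fun_eq_iff)
qed

lemma ds2_polar_ds2_shear:
  assumes "1 + u \<bullet> u - v \<bullet> v > 0"
  shows "ds2_polar u v (ds2_shear u v z) (ds2_shear u v z')
    = 1 / ((1 + u \<bullet> u) * (1 + u \<bullet> u - v \<bullet> v)) * (fst z \<bullet> fst z')
      - (1 + u \<bullet> u) / (1 + u \<bullet> u - v \<bullet> v)^2 * (snd z \<bullet> snd z')"
proof -
  define a where "a = omult u (oconj v)"
  define p where "p = 1 + u \<bullet> u"
  define D where "D = 1 + u \<bullet> u - v \<bullet> v"
  define k where "k = 1 / p"
  have "p > 0" by (simp add: p_def add_pos_nonneg)
  then have k: "k * p = 1" by (simp add: k_def)
  have aa: "a \<bullet> a = (u \<bullet> u) * (v \<bullet> v)" by (simp add: a_def inner_omult_omult)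
  have adj: "x \<bullet> omult a y = y \<bullet> omult (oconj a) x" for x y
    by (metis inner_commute inner_omult_left)
  have "ds2_polar u v (ds2_shear u v z) (ds2_shear u v z')
      = ((1 - v \<bullet> v + k * (a \<bullet> a)) * (fst z \<bullet> fst z') - p * (snd z \<bullet> snd z')) / D^2"
    unfolding ds2_polar_def ds2_shear_def a_def[symmetric] D_def[symmetric]
    unfolding p_def[symmetric] k_def[symmetric]
    by (intro arg_cong[where f = "\<lambda>t. t / D^2"])
      (simp add: inner_add_left inner_add_right omult.add_right omult.scaleR_right
        omult_oconj_left_cancel inner_omult_left inner_omult_cancel adj inner_commute[of "fst z'"];
       use k in algebra)
  also have "1 - v \<bullet> v + k * (a \<bullet> a) = k * D"
    using k aa unfolding p_def D_def by algebra
  also have "(k * D * (fst z \<bullet> fst z') - p * (snd z \<bullet> snd z')) / D^2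
      = 1 / (p * D) * (fst z \<bullet> fst z') - p / D^2 * (snd z \<bullet> snd z')"
    using assms \<open>p > 0\<close> unfolding D_def[symmetric] by (simp add: k_def field_simps power2_eq_square)
  finally show ?thesis unfolding p_def D_def .
qed

lemma ds2_polar_nondegenerate_signature:
  assumes "1 + u \<bullet> u - v \<bullet> v > 0"
  shows "nondegenerate (ds2_polar u v)" "has_signature (ds2_polar u v) 8 8"
proof -
  have "0 < 1 + u \<bullet> u" by (simp add: add_pos_nonneg)
  have DIM_oct: "DIM(oct) = 8" by simp
  note diagonal = nondegenerate_if_diagonal has_signature_if_diagonal
  note diagonal' = diagonal[OF linear_ds2_shear bij_ds2_shear _ _ ds2_polar_ds2_shear[OF assms]]
  show "nondegenerate (ds2_polar u v)" "has_signature (ds2_polar u v) 8 8"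
    using diagonal'[unfolded DIM_oct] assms \<open>0 < 1 + u \<bullet> u\<close> by simp_all
qed

section \<open>The change of charts\<close>

lemma oinv_eq: "oinv x = inverse (x \<bullet> x) *\<^sub>R oconj x"
  by (simp add: oinv_def onorm2_eq_inner divide_inverse)

lemma has_derivative_oinv:
  assumes "u \<noteq> 0"
  shows "(oinv has_derivative (\<lambda>h. - omult (omult (oinv u) h) (oinv u))) (at u)"
proof -
  have N: "u \<bullet> u \<noteq> 0" using assms by simp
  have "oinv = (\<lambda>x. inverse (x \<bullet> x) *\<^sub>R oconj x)" by (simp add: fun_eq_iff oinv_eq)
  then have "(oinv has_derivative
     (\<lambda>h. inverse (u \<bullet> u) *\<^sub>R oconj h
          + (- (inverse (u \<bullet> u) * (u \<bullet> h + h \<bullet> u) * inverse (u \<bullet> u))) *\<^sub>R oconj u)) (at u)"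
    using has_derivative_scaleR[OF
        Deriv.has_derivative_inverse[OF N has_derivative_inner[OF has_derivative_ident has_derivative_ident]]
        bounded_linear.has_derivative[OF bounded_linear_oconj has_derivative_ident]] by simp
  then show ?thesis
    by (rule has_derivative_eq_rhs)
      (use N in \<open>simp add: fun_eq_iff oinv_eq omult.scaleR_left omult.scaleR_right
          omult_oconj_sandwich inner_commute scaleR_diff_right field_simps power2_eq_square\<close>)
qed

definition transition_derivative :: "oct \<Rightarrow> oct \<Rightarrow> oct \<times> oct \<Rightarrow> oct \<times> oct" where
  "transition_derivative u v w =
     (let \<xi>' = - omult (omult (oinv u) (fst w)) (oinv u) in (\<xi>', omult v \<xi>' + omult (snd w) (oinv u)))"

lemma has_derivative_transition:
  assumes "u \<noteq> 0"
  shows "(transition has_derivative transition_derivative u v) (at (u, v))"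
proof -
  have "transition = (\<lambda>p. (oinv (fst p), omult (snd p) (oinv (fst p))))"
    by (simp add: fun_eq_iff transition_def split_beta)
  moreover have inv: "((\<lambda>p. oinv (fst p)) has_derivative
      (\<lambda>w. - omult (omult (oinv u) (fst w)) (oinv u))) (at (u, v))"
    using has_derivative_compose[OF has_derivative_fst[OF has_derivative_ident[of "at (u, v)"]]]
      has_derivative_oinv[OF assms] by simp
  ultimately show ?thesis
    unfolding transition_derivative_def Let_def
    using has_derivative_Pair[OF inv omult.FDERIV[OF has_derivative_snd[OF has_derivative_ident] inv]]
    by simp
qed

lemma inner_oinv_oinv: "oinv u \<bullet> oinv u = 1 / (u \<bullet> u)"
  by (simp add: oinv_def onorm2_eq_inner power2_eq_square)

lemma transition_in_chart_dom:
  assumes "(u, v) \<in> chart_dom" "u \<noteq> 0"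
  shows "transition (u, v) \<in> chart_dom"
proof -
  define c where "c = 1 / (u \<bullet> u)"
  have "1 + oinv u \<bullet> oinv u - omult v (oinv u) \<bullet> omult v (oinv u) = 1 + c - c * (v \<bullet> v)"
    by (simp add: inner_omult_omult inner_oinv_oinv c_def)
  also have "\<dots> = c * (1 + u \<bullet> u - v \<bullet> v)"
    using assms(2) by (simp add: c_def field_simps)
  also have "\<dots> > 0"
    using assms by (simp add: c_def chart_dom_def onorm2_eq_inner)
  finally show ?thesis
    by (simp add: transition_def chart_dom_def onorm2_eq_inner)
qed

lemma inner_omult_sandwich:
  "omult \<eta> (oconj u) \<bullet> omult v (omult (omult (oconj u) \<xi>) (oconj u))
   = (u \<bullet> u) * (omult (omult u (oconj v)) \<eta> \<bullet> \<xi>)"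
proof -
  define z where "z = omult (oconj v) (omult \<eta> (oconj u))"
  have "omult \<eta> (oconj u) \<bullet> omult v (omult (omult (oconj u) \<xi>) (oconj u))
      = omult (omult (oconj u) \<xi>) (oconj u) \<bullet> z"
    unfolding z_def by (simp add: inner_commute inner_omult_left)
  also have "\<dots> = omult (oconj u) \<xi> \<bullet> omult z u"
    by (simp add: inner_omult_right)
  also have "\<dots> = \<xi> \<bullet> omult u (omult z u)"
    by (simp add: inner_omult_left)
  also have "omult u (omult z u) = omult (omult u (oconj v)) (omult (omult \<eta> (oconj u)) u)"
    unfolding z_def omult_flexible omult_moufang ..
  also have "omult (omult \<eta> (oconj u)) u = (u \<bullet> u) *\<^sub>R \<eta>"
    by (rule omult_oconj_right_cancel)
  finally show ?thesis by (simp add: omult.scaleR_right inner_commute)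
qed

lemma inner_omult_oinv_sandwich:
  "omult \<eta> (oinv u) \<bullet> omult v (omult (omult (oinv u) \<xi>) (oinv u))
   = (omult (omult u (oconj v)) \<eta> \<bullet> \<xi>) / (u \<bullet> u)^2"
  by (simp add: oinv_def onorm2_eq_inner omult.scaleR_left omult.scaleR_right inner_omult_sandwich
      power2_eq_square)

lemma ds2_transition:
  assumes "u \<noteq> 0"
  shows "ds2 (transition (u, v)) (transition_derivative u v w) = ds2 (u, v) w"
proof -
  obtain \<xi> \<eta> where w: "w = (\<xi>, \<eta>)" by (cases w)
  define c where "c = 1 / (u \<bullet> u)"
  define \<xi>' where "\<xi>' = - omult (omult (oinv u) \<xi>) (oinv u)"
  define M where "M = omult v \<xi>'"
  define P where "P = omult \<eta> (oinv u)"
  define Y where "Y = omult (omult u (oconj v)) \<eta> \<bullet> \<xi>"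
  have inv_norm: "oinv u \<bullet> oinv u = c" by (simp add: c_def inner_oinv_oinv)
  have \<xi>'_norm: "\<xi>' \<bullet> \<xi>' = c^2 * (\<xi> \<bullet> \<xi>)"
    by (simp add: \<xi>'_def inner_omult_omult inv_norm power2_eq_square)
  have VV: "omult v (oinv u) \<bullet> omult v (oinv u) = c * (v \<bullet> v)"
    by (simp add: inner_omult_omult inv_norm)
  have MM: "M \<bullet> M = (v \<bullet> v) * (c^2 * (\<xi> \<bullet> \<xi>))"
    by (simp add: M_def inner_omult_omult \<xi>'_norm)
  have PP: "P \<bullet> P = c * (\<eta> \<bullet> \<eta>)"
    by (simp add: P_def inner_omult_omult inv_norm)
  have PM: "P \<bullet> M = - (c^2 * Y)"
    by (simp add: P_def M_def \<xi>'_def omult.minus_right inner_omult_oinv_sandwich Y_def c_def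
        power_divide)
  have EE: "(M + P) \<bullet> (M + P) = (v \<bullet> v) * (c^2 * (\<xi> \<bullet> \<xi>)) - 2 * (c^2 * Y) + c * (\<eta> \<bullet> \<eta>)"
    by (simp add: inner_add_left inner_add_right MM PM PP inner_commute[of M P])
  have "omult (oinv u) (oconj (omult v (oinv u))) = c *\<^sub>R oconj v"
    by (simp add: oconj_omult omult_oconj_left_cancel inv_norm)
  moreover have "omult (oconj v) (M + P) \<bullet> \<xi>' = (M + P) \<bullet> M"
    by (simp add: inner_omult_left M_def)
  ultimately have cross_term: "omult (omult (oinv u) (oconj (omult v (oinv u)))) (M + P) \<bullet> \<xi>'
      = c * ((v \<bullet> v) * (c^2 * (\<xi> \<bullet> \<xi>)) - c^2 * Y)"
    by (simp add: omult.scaleR_left inner_add_left MM PM)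
  have "ds2 (transition (u, v)) (transition_derivative u v w)
      = ((1 - c * (v \<bullet> v)) * (c^2 * (\<xi> \<bullet> \<xi>))
          - (1 + c) * ((v \<bullet> v) * (c^2 * (\<xi> \<bullet> \<xi>)) - 2 * (c^2 * Y) + c * (\<eta> \<bullet> \<eta>))
          + 2 * (c * ((v \<bullet> v) * (c^2 * (\<xi> \<bullet> \<xi>)) - c^2 * Y)))
        / (1 + c - c * (v \<bullet> v))^2"
    unfolding transition_def transition_derivative_def w Let_def \<xi>'_def[symmetric] prod.case
      ds2_eq_inner fst_conv snd_conv M_def[symmetric] P_def[symmetric]
    by (simp only: inv_norm VV \<xi>'_norm EE cross_term)
  also have "\<dots> = (c^2 * ((1 - v \<bullet> v) * (\<xi> \<bullet> \<xi>) - (1 + u \<bullet> u) * (\<eta> \<bullet> \<eta>) + 2 * Y))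
      / (c * (1 + u \<bullet> u - v \<bullet> v))^2"
    using assms by (intro arg_cong2[where f = "(/)"]) (simp_all add: c_def field_simps power2_eq_square)
  also have "\<dots> = ds2 (u, v) w"
    using assms by (simp add: ds2_eq_inner w Y_def power_mult_distrib, simp add: c_def)
  finally show ?thesis .
qed

theorem proposition7p2:
  shows "(\<forall>p\<in>chart_dom.
            bilinear (metric_form p)
          \<and> (\<forall>x y. metric_form p x y = metric_form p y x)
          \<and> (\<forall>w. metric_form p w w = ds2 p w)
          \<and> nondegenerate (metric_form p)
          \<and> has_signature (metric_form p) 8 8)
       \<and> (\<forall>p\<in>chart_dom. fst p \<noteq> 0 \<longrightarrow>
            transition p \<in> chart_dom
          \<and> (\<exists>D. (transition has_derivative D) (at p)
                 \<and> (\<forall>w. ds2 (transition p) (D w) = ds2 p w)))"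
proof (intro conjI ballI impI)
  fix p assume "p \<in> chart_dom"
  then obtain u v where p: "p = (u, v)" and D: "1 + u \<bullet> u - v \<bullet> v > 0"
    by (cases p) (simp add: chart_dom_def onorm2_eq_inner)
  show "bilinear (metric_form p)"
    by (simp add: p metric_form_eq_ds2_polar bilinear_ds2_polar)
  show "\<forall>x y. metric_form p x y = metric_form p y x"
    by (simp add: p metric_form_eq_ds2_polar ds2_polar_commute)
  show "\<forall>w. metric_form p w w = ds2 p w"
    by (simp add: p metric_form_eq_ds2_polar ds2_eq_ds2_polar)
  show "nondegenerate (metric_form p)" "has_signature (metric_form p) 8 8"
    using ds2_polar_nondegenerate_signature[OF D] by (simp_all add: p metric_form_eq_ds2_polar)
next
  fix p assume "p \<in> chart_dom" "fst p \<noteq> 0"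
  then obtain u v where p: "p = (u, v)" "(u, v) \<in> chart_dom" "u \<noteq> 0"
    by (cases p) simp
  show "transition p \<in> chart_dom"
    using transition_in_chart_dom p by simp
  show "\<exists>D. (transition has_derivative D) (at p) \<and> (\<forall>w. ds2 (transition p) (D w) = ds2 p w)"
    using has_derivative_transition ds2_transition p by blast
qed

end
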